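(* Assume the setting and hypotheses (A1)–(A4) of the context, with $\gamma,\lambda>0$, $\beta\in(0,1)$, $c_1\in(0,1/2)$, and let $\{z^k=(u^k,v^k,C^k)\}$ be generated by the inexact block coordinate descent scheme described in the context. Then there exists a constant $w_1>0$ such that for all $k$, $$E_\lambda(z^k)-E_\lambda(z^{k+1})\ge w_1\|z^{k+1}-z^k\|^2.$$
   Context: Let $n\ge1$, $\hat X\in\mathbb{R}^{n\times n}$ an observed transport plan (nonnegative, with row sums $\mu$ and column sums $\nu$, $\mu,\nu$ probability vectors), $\psi:\mathbb{R}\to(-\infty,+\infty]$ convex with $\psi(Z):=\sum_{i,j}\psi(Z_{ij})$ for matrices, $(u\oplus v)_{ij}:=u_i+v_j$, $E(u,v,C):=\psi\big((u\oplus v-C)/\gamma\big)-\big\langle(u\oplus v-C)/\gamma,\hat X\big\rangle$ and $E_\lambda(u,v,C):=E(u,v,C)+\lambda(R_1(u)+R_2(v)+R_3(C))$. Hypotheses: (A1) $\psi$ is of Legendre type and $C^2$ on $\operatorname{int}(\operatorname{dom}\psi)$; (A2) for every generated iterate, $\hat X_{ij}$ and $(u^k_i+v^k_j-C^k_{ij})/\gamma$ lie in $\operatorname{int}(\operatorname{dom}\psi)$ for all $i,j$; (A3) $R_1,R_2:\mathbb{R}^n\to\mathbb{R}$, $R_3:\mathbb{R}^{n\times n}\to\mathbb{R}$ are continuously differentiable and strongly convex with moduli $\sigma_1,\sigma_2,\sigma_3>0$; (A4) $\mathcal{C}\subseteq\mathbb{R}^{n\times n}$ is nonempty, closed, convex,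 with Euclidean projection $P_{\mathcal{C}}$. The scheme, from $z^0\in\mathbb{R}^n\times\mathbb{R}^n\times\mathcal{C}$: at iteration $k$, (u-block) with $g_u=\nabla_uE_\lambda(u^k,v^k,C^k)$, $H_u=\nabla^2_{uu}E_\lambda(u^k,v^k,C^k)$, $d_u=-H_u^{-1}g_u$, let $\alpha^u_k$ be the first $\alpha\in\{1,\beta,\beta^2,\dots\}$ with $E_\lambda(u^k+\alpha d_u,v^k,C^k)\le E_\lambda(u^k,v^k,C^k)+c_1\alpha g_u^\top d_u$, and set $u^{k+1}=u^k+\alpha_k^ud_u$; (v-block) the same with $v$ in place of $u$ at the point $(u^{k+1},v^k,C^k)$, giving $v^{k+1}=v^k+\alpha_k^vd_v$; (C-block) with $g_C=\nabla_CE_\lambda(u^{k+1},v^{k+1},C^k)$ and $C(\alpha):=P_{\mathcal{C}}(C^k-\alpha g_C)$, let $\alpha^C_k$ be the first $\alpha\in\{1,\beta,\beta^2,\dots\}$ with $E_\lambda(u^{k+1},v^{k+1},C(\alpha))\le E_\lambda(u^{k+1},v^{k+1},C^k)+c_1\langle g_C,C(\alpha)-C^k\rangle$, and set $C^{k+1}=C(\alpha^C_k)$. *)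

theory Defs
  imports "HOL-Analysis.Analysis"
begin

(* Vectors in R^n are real^'n, n x n matrices are real^'n^'n (Frobenius inner product/norm). *)

definition strictly_convex_on :: "real set \<Rightarrow> (real \<Rightarrow> real) \<Rightarrow> bool" where
  "strictly_convex_on S f \<longleftrightarrow>
     (\<forall>x\<in>S. \<forall>y\<in>S. \<forall>t. x \<noteq> y \<and> 0 < t \<and> t < 1 \<longrightarrow>
        f (t * x + (1 - t) * y) < t * f x + (1 - t) * f y)"

definition strongly_convex :: "('a::real_inner \<Rightarrow> real) \<Rightarrow> real \<Rightarrow> bool" where
  "strongly_convex f \<sigma> \<longleftrightarrow>
     (\<forall>x y t. 0 \<le> t \<and> t \<le> 1 \<longrightarrow>
        f (t *\<^sub>R x + (1 - t) *\<^sub>R y)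
          \<le> t * f x + (1 - t) * f y - \<sigma> / 2 * t * (1 - t) * (norm (x - y))\<^sup>2)"

definition C1_grad :: "('a::real_inner \<Rightarrow> real) \<Rightarrow> bool" where
  "C1_grad f \<longleftrightarrow> (\<exists>g. (\<forall>x. (f has_derivative (\<lambda>h. g x \<bullet> h)) (at x)) \<and> continuous_on UNIV g)"

definition edom :: "(real \<Rightarrow> ereal) \<Rightarrow> real set" where
  "edom f = {x. f x \<noteq> \<infinity>}"

definition rval :: "(real \<Rightarrow> ereal) \<Rightarrow> real \<Rightarrow> real" where
  "rval f x = real_of_ereal (f x)"

text \<open>Legendre type (Rockafellar, Sect. 26): f closed proper convex, essentially smooth
  (int dom f nonempty, f differentiable on int dom f, |f'(x_k)| \<rightarrow> \<infinity> whenever x_k in int dom f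
  tends to a boundary point of int dom f), and strictly convex on int dom f.\<close>
definition legendre_type :: "(real \<Rightarrow> ereal) \<Rightarrow> bool" where
  "legendre_type f \<longleftrightarrow>
     (\<forall>x. f x \<noteq> -\<infinity>) \<and> edom f \<noteq> {} \<and>
     (\<forall>x y t. 0 < t \<and> t < 1 \<longrightarrow> f (t * x + (1 - t) * y) \<le> ereal t * f x + ereal (1 - t) * f y) \<and>
     (\<forall>x. f x \<le> Liminf (at x) f) \<and>
     interior (edom f) \<noteq> {} \<and>
     (\<forall>x\<in>interior (edom f). rval f differentiable (at x)) \<and>
     strictly_convex_on (interior (edom f)) (rval f) \<and>
     (\<forall>s x. (\<forall>k. s k \<in> interior (edom f)) \<and> s \<longlonglongrightarrow> x \<and> x \<in> frontier (interior (edom f)) \<longrightarrow>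
        filterlim (\<lambda>k. \<bar>deriv (rval f) (s k)\<bar>) at_top sequentially)"

definition C2_on :: "real set \<Rightarrow> (real \<Rightarrow> real) \<Rightarrow> bool" where
  "C2_on D f \<longleftrightarrow> (\<exists>f1 f2. (\<forall>x\<in>D. (f has_real_derivative f1 x) (at x) \<and>
                                   (f1 has_real_derivative f2 x) (at x)) \<and> continuous_on D f2)"

definition oplus :: "real^'n \<Rightarrow> real^'n \<Rightarrow> real^'n^'n" where
  "oplus u v = (\<chi> i j. u $ i + v $ j)"

definition psiM :: "(real \<Rightarrow> ereal) \<Rightarrow> real^'n^'n \<Rightarrow> ereal" where
  "psiM \<psi> Z = (\<Sum>i\<in>UNIV. \<Sum>j\<in>UNIV. \<psi> (Z $ i $ j))"

definition Eobj :: "(real \<Rightarrow> ereal) \<Rightarrow> real \<Rightarrow> real^'n^'n \<Rightarrow> real^'n \<Rightarrow> real^'n \<Rightarrow> real^'n^'n \<Rightarrow> ereal" where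
  "Eobj \<psi> \<gamma> Xh u v C =
     psiM \<psi> ((1 / \<gamma>) *\<^sub>R (oplus u v - C)) - ereal (((1 / \<gamma>) *\<^sub>R (oplus u v - C)) \<bullet> Xh)"

definition Elam :: "(real \<Rightarrow> ereal) \<Rightarrow> real \<Rightarrow> real^'n^'n \<Rightarrow> real
                    \<Rightarrow> (real^'n \<Rightarrow> real) \<Rightarrow> (real^'n \<Rightarrow> real) \<Rightarrow> (real^'n^'n \<Rightarrow> real)
                    \<Rightarrow> real^'n \<Rightarrow> real^'n \<Rightarrow> real^'n^'n \<Rightarrow> ereal" where
  "Elam \<psi> \<gamma> Xh lam R1 R2 R3 u v C = Eobj \<psi> \<gamma> Xh u v C + ereal (lam * (R1 u + R2 v + R3 C))"

text \<open>Damped Newton step with Armijo backtracking for a block function F :: real^'n \<Rightarrow> ereal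
  at the point x, producing x'. g is the gradient of F at x, H its Hessian (the derivative of
  the gradient map G at x, which exists on a neighbourhood of x), d = -H^{-1} g, and the
  step length is the first beta^m (m = 0,1,2,...) satisfying the Armijo condition.\<close>
definition newton_block :: "(real^'n \<Rightarrow> ereal) \<Rightarrow> real \<Rightarrow> real \<Rightarrow> real^'n \<Rightarrow> real^'n \<Rightarrow> bool" where
  "newton_block F \<beta> c1 x x' \<longleftrightarrow>
     (\<exists>G H. eventually (\<lambda>y. ((\<lambda>y. real_of_ereal (F y)) has_derivative (\<lambda>h. G y \<bullet> h)) (at y)) (nhds x) \<and>
            (G has_derivative (\<lambda>h. H *v h)) (at x) \<and>
            (let g = G x; d = - (matrix_inv H *v g);
                 armijo = (\<lambda>m::nat. F (x + (\<beta> ^ m) *\<^sub>R d) \<le> F x + ereal (c1 * \<beta> ^ m * (g \<bullet> d)))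
             in \<exists>m. armijo m \<and> (\<forall>j<m. \<not> armijo j) \<and> x' = x + (\<beta> ^ m) *\<^sub>R d))"

definition proj_block :: "(real^'n^'n) set \<Rightarrow> (real^'n^'n \<Rightarrow> ereal) \<Rightarrow> real \<Rightarrow> real
                          \<Rightarrow> real^'n^'n \<Rightarrow> real^'n^'n \<Rightarrow> bool" where
  "proj_block S F \<beta> c1 x x' \<longleftrightarrow>
     (\<exists>g. ((\<lambda>y. real_of_ereal (F y)) has_derivative (\<lambda>h. g \<bullet> h)) (at x) \<and>
          (let P = (\<lambda>m::nat. closest_point S (x - (\<beta> ^ m) *\<^sub>R g));
               armijo = (\<lambda>m. F (P m) \<le> F x + ereal (c1 * (g \<bullet> (P m - x))))
           in \<exists>m. armijo m \<and> (\<forall>j<m. \<not> armijo j) \<and> x' = P m))"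

end

theory Submission
  imports Defs
begin

text \<open>Each block update satisfies an Armijo condition
  \<open>F x' \<le> F x + c1 \<langle>g, x' - x\<rangle>\<close>, where \<open>g\<close> is the gradient of the block function \<open>F\<close> at \<open>x\<close>;
  the Newton direction and the projection play no other role. Each block function is a convex
  function (\<open>\<psi>\<close> summed over the entries of an affine image of the block variable) plus
  \<open>lam\<close> times a strongly convex regulariser, so
  \<open>F x' \<ge> F x + \<langle>g, x' - x\<rangle> + lam \<sigma> / 2 \<parallel>x' - x\<parallel>\<^sup>2\<close>. Together with the Armijo condition
  this forces \<open>-\<langle>g, x' - x\<rangle> \<ge> lam \<sigma> \<parallel>x' - x\<parallel>\<^sup>2 / (2 (1 - c1))\<close>, hence a decrease of at least
  \<open>c1 lam \<sigma> / (2 (1 - c1)) \<parallel>x' - x\<parallel>\<^sup>2\<close>. Summing over the three blocks with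
  \<open>\<sigma> = min \<sigma>1 \<sigma>2 \<sigma>3\<close> gives the claim.\<close>

definition ereal_convex :: "('a::real_vector \<Rightarrow> ereal) \<Rightarrow> bool" where
  "ereal_convex \<Phi> \<longleftrightarrow> (\<forall>x. \<Phi> x \<noteq> -\<infinity>) \<and>
     (\<forall>x y t. 0 < t \<and> t < 1 \<longrightarrow> \<Phi> (t *\<^sub>R x + (1 - t) *\<^sub>R y) \<le> ereal t * \<Phi> x + ereal (1 - t) * \<Phi> y)"

lemma ereal_convex_not_MInfty: "ereal_convex \<Phi> \<Longrightarrow> \<Phi> x \<noteq> -\<infinity>"
  unfolding ereal_convex_def by blast

lemma ereal_convexI:
  assumes "\<And>x. \<Phi> x \<noteq> -\<infinity>"
    and "\<And>x y a b t. \<Phi> x = ereal a \<Longrightarrow> \<Phi> y = ereal b \<Longrightarrow> 0 < t \<Longrightarrow> t < 1 \<Longrightarrow>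
           \<Phi> (t *\<^sub>R x + (1 - t) *\<^sub>R y) \<le> ereal (t * a + (1 - t) * b)"
  shows "ereal_convex \<Phi>"
  unfolding ereal_convex_def
proof (intro conjI allI impI)
  fix x y :: 'a and t :: real
  assume t: "0 < t \<and> t < 1"
  show "\<Phi> (t *\<^sub>R x + (1 - t) *\<^sub>R y) \<le> ereal t * \<Phi> x + ereal (1 - t) * \<Phi> y"
  proof (cases "\<Phi> x = \<infinity> \<or> \<Phi> y = \<infinity>")
    case True
    then show ?thesis using t assms(1)[of x] assms(1)[of y] by auto
  next
    case False
    then obtain a b where "\<Phi> x = ereal a" "\<Phi> y = ereal b"
      using assms(1) by (meson ereal_cases)
    then show ?thesis using assms(2) t by simp
  qed
qed (use assms(1) in blast)

lemma ereal_convexD: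
  assumes "ereal_convex \<Phi>" "\<Phi> x = ereal a" "\<Phi> y = ereal b" "0 < t" "t < 1"
  obtains c where "\<Phi> (t *\<^sub>R x + (1 - t) *\<^sub>R y) = ereal c" "c \<le> t * a + (1 - t) * b"
proof -
  have "\<Phi> (t *\<^sub>R x + (1 - t) *\<^sub>R y) \<le> ereal t * \<Phi> x + ereal (1 - t) * \<Phi> y"
    using assms(1,4,5) unfolding ereal_convex_def by blast
  also have "\<dots> = ereal (t * a + (1 - t) * b)"
    using assms(2,3) by simp
  finally have "\<Phi> (t *\<^sub>R x + (1 - t) *\<^sub>R y) \<le> ereal (t * a + (1 - t) * b)" .
  moreover have "\<Phi> (t *\<^sub>R x + (1 - t) *\<^sub>R y) \<noteq> -\<infinity>"
    using assms(1) by (rule ereal_convex_not_MInfty)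
  ultimately show ?thesis using that by (cases "\<Phi> (t *\<^sub>R x + (1 - t) *\<^sub>R y)") auto
qed

lemma ereal_convex_compose_affine:
  assumes "ereal_convex \<Phi>"
    and "\<And>x y t. M (t *\<^sub>R x + (1 - t) *\<^sub>R y) = t *\<^sub>R M x + (1 - t) *\<^sub>R M y"
  shows "ereal_convex (\<lambda>x. \<Phi> (M x))"
  using assms unfolding ereal_convex_def by simp

lemma ereal_convex_add:
  assumes \<Phi>: "ereal_convex \<Phi>" and \<Psi>: "ereal_convex \<Psi>"
  shows "ereal_convex (\<lambda>x. \<Phi> x + \<Psi> x)"
proof (rule ereal_convexI)
  fix x
  show "\<Phi> x + \<Psi> x \<noteq> -\<infinity>"
    using ereal_convex_not_MInfty[OF \<Phi>] ereal_convex_not_MInfty[OF \<Psi>] by simp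
next
  fix x y a b and t :: real
  assume x: "\<Phi> x + \<Psi> x = ereal a" and y: "\<Phi> y + \<Psi> y = ereal b" and t: "0 < t" "t < 1"
  obtain a1 a2 b1 b2 where fin: "\<Phi> x = ereal a1" "\<Psi> x = ereal a2" "\<Phi> y = ereal b1" "\<Psi> y = ereal b2"
    using x y ereal_convex_not_MInfty[OF \<Phi>] ereal_convex_not_MInfty[OF \<Psi>]
    by (metis ereal_cases ereal_plus_eq_PInfty)
  obtain p q
    where "\<Phi> (t *\<^sub>R x + (1 - t) *\<^sub>R y) = ereal p" "p \<le> t * a1 + (1 - t) * b1"
      and "\<Psi> (t *\<^sub>R x + (1 - t) *\<^sub>R y) = ereal q" "q \<le> t * a2 + (1 - t) * b2"
    using ereal_convexD[OF \<Phi> fin(1,3) t] ereal_convexD[OF \<Psi> fin(2,4) t] by metis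
  moreover have "a = a1 + a2" "b = b1 + b2"
    using x y fin by simp_all
  ultimately show "\<Phi> (t *\<^sub>R x + (1 - t) *\<^sub>R y) + \<Psi> (t *\<^sub>R x + (1 - t) *\<^sub>R y) \<le> ereal (t * a + (1 - t) * b)"
    by (simp add: algebra_simps)
qed

lemma ereal_convex_sum:
  assumes "finite I" "\<And>i. i \<in> I \<Longrightarrow> ereal_convex (\<Phi> i)"
  shows "ereal_convex (\<lambda>x. \<Sum>i\<in>I. \<Phi> i x)"
  using assms
proof (induction I rule: finite_induct)
  case empty
  show ?case by (simp add: ereal_convex_def)
next
  case (insert i I)
  then show ?case by (simp add: ereal_convex_add)
qed

lemma ereal_convex_ereal:
  assumes "convex_on UNIV f"
  shows "ereal_convex (\<lambda>x. ereal (f x))"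
  by (rule ereal_convexI) (use assms in \<open>auto simp: convex_on_def\<close>)

lemma tangent_gap_le_chord:
  fixes f :: "real \<Rightarrow> real"
  assumes deriv: "(f has_real_derivative f') (at_right 0)"
    and chord: "\<And>s. 0 < s \<Longrightarrow> s < 1 \<Longrightarrow> f s \<le> (1 - s) * f 0 + s * f 1 - \<kappa> * s * (1 - s)"
  shows "f 0 + f' + \<kappa> \<le> f 1"
proof -
  have quotient: "((\<lambda>s. (f s - f 0) / (s - 0)) \<longlongrightarrow> f') (at_right 0)"
    using deriv by (simp add: has_field_derivative_iff)
  have bound: "((\<lambda>s. f 1 - f 0 - \<kappa> * (1 - s)) \<longlongrightarrow> f 1 - f 0 - \<kappa> * (1 - 0)) (at_right 0)"
    by (intro tendsto_intros)
  have "\<forall>\<^sub>F s in at_right 0. (f s - f 0) / (s - 0) \<le> f 1 - f 0 - \<kappa> * (1 - s)"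
  proof (rule eventually_at_rightI[of 0 1])
    fix s :: real
    assume "s \<in> {0<..<1}"
    then have s: "0 < s" "s < 1" by auto
    then have "f s - f 0 \<le> (f 1 - f 0 - \<kappa> * (1 - s)) * s"
      using chord[of s] by (simp add: algebra_simps)
    then show "(f s - f 0) / (s - 0) \<le> f 1 - f 0 - \<kappa> * (1 - s)"
      using s by (simp add: pos_divide_le_eq)
  qed simp
  then have "f' \<le> f 1 - f 0 - \<kappa> * (1 - 0)"
    using tendsto_le[OF trivial_limit_at_right_real bound quotient] by blast
  then show ?thesis by simp
qed

lemma strongly_convex_antimono:
  fixes R :: "'a::real_inner \<Rightarrow> real"
  assumes "strongly_convex R \<sigma>" "\<sigma>' \<le> \<sigma>"
  shows "strongly_convex R \<sigma>'"
  unfolding strongly_convex_def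
proof (intro allI impI)
  fix x y :: 'a and t :: real
  assume t: "0 \<le> t \<and> t \<le> 1"
  have "\<sigma>' / 2 * t * (1 - t) * (norm (x - y))\<^sup>2 \<le> \<sigma> / 2 * t * (1 - t) * (norm (x - y))\<^sup>2"
    using t assms(2) by (intro mult_right_mono) auto
  then show "R (t *\<^sub>R x + (1 - t) *\<^sub>R y)
      \<le> t * R x + (1 - t) * R y - \<sigma>' / 2 * t * (1 - t) * (norm (x - y))\<^sup>2"
    using assms(1) t unfolding strongly_convex_def by (smt (verit))
qed

lemma strongly_convex_scale_shift:
  fixes R :: "'a::real_inner \<Rightarrow> real"
  assumes "strongly_convex R \<sigma>" "0 \<le> lam"
  shows "strongly_convex (\<lambda>x. lam * R x + c) (lam * \<sigma>)"
  unfolding strongly_convex_def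
proof (intro allI impI)
  fix x y :: 'a and t :: real
  assume t: "0 \<le> t \<and> t \<le> 1"
  have "lam * R (t *\<^sub>R x + (1 - t) *\<^sub>R y)
      \<le> lam * (t * R x + (1 - t) * R y - \<sigma> / 2 * t * (1 - t) * (norm (x - y))\<^sup>2)"
    using assms t unfolding strongly_convex_def by (intro mult_left_mono) auto
  then show "lam * R (t *\<^sub>R x + (1 - t) *\<^sub>R y) + c
      \<le> t * (lam * R x + c) + (1 - t) * (lam * R y + c) - lam * \<sigma> / 2 * t * (1 - t) * (norm (x - y))\<^sup>2"
    by (simp add: algebra_simps)
qed

lemma gradient_inequality_convex_plus_strongly_convex:
  fixes \<Phi> :: "'a::real_inner \<Rightarrow> ereal"
  assumes \<Phi>: "ereal_convex \<Phi>" and \<rho>: "strongly_convex \<rho> \<sigma>"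
    and x: "\<Phi> x = ereal a" and y: "\<Phi> y = ereal b"
    and deriv: "((\<lambda>z. real_of_ereal (\<Phi> z + ereal (\<rho> z))) has_derivative (\<lambda>h. g \<bullet> h)) (at x)"
  shows "a + \<rho> x + g \<bullet> (y - x) + \<sigma> / 2 * (norm (y - x))\<^sup>2 \<le> b + \<rho> y"
proof -
  define f where "f s = real_of_ereal (\<Phi> (x + s *\<^sub>R (y - x)) + ereal (\<rho> (x + s *\<^sub>R (y - x))))" for s
  have "((\<lambda>s. x + s *\<^sub>R (y - x)) has_derivative (\<lambda>s. s *\<^sub>R (y - x))) (at 0)"
    by (auto intro!: derivative_eq_intros)
  moreover have "((\<lambda>z. real_of_ereal (\<Phi> z + ereal (\<rho> z))) has_derivative (\<lambda>h. g \<bullet> h)) (at (x + 0 *\<^sub>R (y - x)))"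
    using deriv by simp
  ultimately have "(f has_derivative (\<lambda>s. g \<bullet> (s *\<^sub>R (y - x)))) (at 0)"
    unfolding f_def by (rule diff_chain_at[unfolded o_def])
  moreover have "(\<lambda>s. g \<bullet> (s *\<^sub>R (y - x))) = (*) (g \<bullet> (y - x))"
    by (simp add: fun_eq_iff)
  ultimately have "(f has_real_derivative g \<bullet> (y - x)) (at_right 0)"
    unfolding has_field_derivative_def by (simp add: has_derivative_at_withinI)
  moreover have "f s \<le> (1 - s) * f 0 + s * f 1 - \<sigma> / 2 * (norm (y - x))\<^sup>2 * s * (1 - s)"
    if s: "0 < s" "s < 1" for s
  proof -
    have segment: "x + s *\<^sub>R (y - x) = s *\<^sub>R y + (1 - s) *\<^sub>R x"
      by (simp add: algebra_simps)
    obtain c where c: "\<Phi> (s *\<^sub>R y + (1 - s) *\<^sub>R x) = ereal c" "c \<le> s * b + (1 - s) * a"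
      using ereal_convexD[OF \<Phi> y x s] .
    have "\<rho> (s *\<^sub>R y + (1 - s) *\<^sub>R x) \<le> s * \<rho> y + (1 - s) * \<rho> x - \<sigma> / 2 * s * (1 - s) * (norm (y - x))\<^sup>2"
      using \<rho> s unfolding strongly_convex_def by auto
    then show ?thesis
      using c x y unfolding f_def segment by (simp add: algebra_simps)
  qed
  ultimately have "f 0 + g \<bullet> (y - x) + \<sigma> / 2 * (norm (y - x))\<^sup>2 \<le> f 1"
    by (rule tangent_gap_le_chord)
  then show ?thesis
    using x y unfolding f_def by simp
qed

definition armijo_step :: "('a::real_inner \<Rightarrow> ereal) \<Rightarrow> real \<Rightarrow> 'a \<Rightarrow> 'a \<Rightarrow> bool" where
  "armijo_step F c1 x x' \<longleftrightarrow>
     (\<exists>g. ((\<lambda>y. real_of_ereal (F y)) has_derivative (\<lambda>h. g \<bullet> h)) (at x) \<and>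
          F x' \<le> F x + ereal (c1 * (g \<bullet> (x' - x))))"

lemma newton_block_imp_armijo_step:
  assumes "newton_block F \<beta> c1 x x'"
  shows "armijo_step F c1 x x'"
proof -
  obtain G H m where
    grad: "\<forall>\<^sub>F y in nhds x. ((\<lambda>y. real_of_ereal (F y)) has_derivative (\<lambda>h. G y \<bullet> h)) (at y)" and
    armijo: "F (x + (\<beta> ^ m) *\<^sub>R - (matrix_inv H *v G x))
      \<le> F x + ereal (c1 * \<beta> ^ m * (G x \<bullet> - (matrix_inv H *v G x)))" and
    x': "x' = x + (\<beta> ^ m) *\<^sub>R - (matrix_inv H *v G x)"
    using assms unfolding newton_block_def Let_def by blast
  have "c1 * \<beta> ^ m * (G x \<bullet> - (matrix_inv H *v G x)) = c1 * (G x \<bullet> (x' - x))"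
    unfolding x' by simp
  then show ?thesis
    unfolding armijo_step_def using eventually_nhds_x_imp_x[OF grad] armijo x' by metis
qed

lemma proj_block_imp_armijo_step:
  assumes "proj_block S F \<beta> c1 x x'"
  shows "armijo_step F c1 x x'"
  using assms unfolding proj_block_def armijo_step_def Let_def by blast

lemma armijo_step_sufficient_decrease:
  fixes \<Phi> :: "'a::real_inner \<Rightarrow> ereal"
  assumes \<Phi>: "ereal_convex \<Phi>" and \<rho>: "strongly_convex \<rho> \<sigma>" and c1: "0 < c1" "c1 < 1"
    and x: "\<Phi> x + ereal (\<rho> x) = ereal e"
    and step: "armijo_step (\<lambda>z. \<Phi> z + ereal (\<rho> z)) c1 x x'"
  obtains e' where "\<Phi> x' + ereal (\<rho> x') = ereal e'"
    and "c1 * \<sigma> / (2 * (1 - c1)) * (norm (x' - x))\<^sup>2 \<le> e - e'"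
proof -
  obtain g where
    deriv: "((\<lambda>z. real_of_ereal (\<Phi> z + ereal (\<rho> z))) has_derivative (\<lambda>h. g \<bullet> h)) (at x)" and
    armijo: "\<Phi> x' + ereal (\<rho> x') \<le> \<Phi> x + ereal (\<rho> x) + ereal (c1 * (g \<bullet> (x' - x)))"
    using step unfolding armijo_step_def by blast
  have a: "\<Phi> x = ereal (e - \<rho> x)"
    using x by (cases "\<Phi> x") auto
  have "\<Phi> x' \<noteq> \<infinity>"
    using armijo x by auto
  then obtain b where b: "\<Phi> x' = ereal b"
    using ereal_convex_not_MInfty[OF \<Phi>] by (cases "\<Phi> x'") auto
  have "e - \<rho> x + \<rho> x + g \<bullet> (x' - x) + \<sigma> / 2 * (norm (x' - x))\<^sup>2 \<le> b + \<rho> x'"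
    using gradient_inequality_convex_plus_strongly_convex[OF \<Phi> \<rho> a b deriv] .
  then have "(1 - c1) * - (g \<bullet> (x' - x)) \<ge> \<sigma> / 2 * (norm (x' - x))\<^sup>2"
    and decrease: "c1 * - (g \<bullet> (x' - x)) \<le> e - (b + \<rho> x')"
    using armijo x b by (simp_all add: algebra_simps)
  then have "- (g \<bullet> (x' - x)) \<ge> \<sigma> / (2 * (1 - c1)) * (norm (x' - x))\<^sup>2"
    using c1 by (simp add: field_simps)
  then have "c1 * (\<sigma> / (2 * (1 - c1)) * (norm (x' - x))\<^sup>2) \<le> c1 * - (g \<bullet> (x' - x))"
    using c1 by (intro mult_left_mono) auto
  then show thesis
    using that[of "b + \<rho> x'"] decrease b by simp
qed

lemma legendre_type_ereal_convex: "legendre_type \<psi> \<Longrightarrow> ereal_convex \<psi>"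
  unfolding legendre_type_def ereal_convex_def by simp

lemma ereal_convex_psiM: "ereal_convex \<psi> \<Longrightarrow> ereal_convex (psiM \<psi>)"
  unfolding psiM_def
  by (intro ereal_convex_sum ereal_convex_compose_affine[where M = "\<lambda>Z. Z $ _ $ _"]) auto

lemma ereal_convex_Eobj:
  assumes "legendre_type \<psi>"
  shows "ereal_convex (\<lambda>(u, v, C). Eobj \<psi> \<gamma> Xh u v C)"
proof -
  have "convex_on UNIV (\<lambda>Z. - (Z \<bullet> Xh))"
    unfolding convex_on_def by (simp add: inner_add_left algebra_simps)
  then have "ereal_convex (\<lambda>Z. psiM \<psi> Z + ereal (- (Z \<bullet> Xh)))"
    using assms by (intro ereal_convex_add ereal_convex_psiM ereal_convex_ereal legendre_type_ereal_convex)
  then have "ereal_convex (\<lambda>z. (\<lambda>Z. psiM \<psi> Z + ereal (- (Z \<bullet> Xh)))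
      ((\<lambda>(u, v, C). (1 / \<gamma>) *\<^sub>R (oplus u v - C)) z))"
    by (rule ereal_convex_compose_affine) (auto simp: oplus_def vec_eq_iff algebra_simps split: prod.splits)
  then show ?thesis
    by (simp add: Eobj_def case_prod_unfold minus_ereal_def)
qed

lemma Elam_finite:
  assumes \<psi>: "legendre_type \<psi>" and dom: "\<forall>i j. (u $ i + v $ j - C $ i $ j) / \<gamma> \<in> edom \<psi>"
  obtains e where "Elam \<psi> \<gamma> Xh lam R1 R2 R3 u v C = ereal e"
proof -
  define Z where "Z = (1 / \<gamma>) *\<^sub>R (oplus u v - C)"
  have "\<psi> (Z $ i $ j) \<noteq> \<infinity>" for i j
    using dom unfolding Z_def edom_def by (simp add: oplus_def)
  then have "psiM \<psi> Z \<noteq> \<infinity>"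
    unfolding psiM_def by (simp add: sum_Pinfty)
  moreover have "psiM \<psi> Z \<noteq> -\<infinity>"
    using ereal_convex_not_MInfty[OF ereal_convex_psiM[OF legendre_type_ereal_convex[OF \<psi>]]] .
  ultimately show thesis
    using that unfolding Elam_def Eobj_def Z_def[symmetric] by (cases "psiM \<psi> Z") auto
qed

lemma Elam_u_block_decrease:
  assumes \<psi>: "legendre_type \<psi>" and R1: "strongly_convex R1 \<sigma>" and lam: "0 \<le> lam"
    and c1: "0 < c1" "c1 < 1"
    and x: "Elam \<psi> \<gamma> Xh lam R1 R2 R3 x v C = ereal e"
    and step: "armijo_step (\<lambda>x. Elam \<psi> \<gamma> Xh lam R1 R2 R3 x v C) c1 x x'"
  obtains e' where "Elam \<psi> \<gamma> Xh lam R1 R2 R3 x' v C = ereal e'"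
    and "c1 * (lam * \<sigma>) / (2 * (1 - c1)) * (norm (x' - x))\<^sup>2 \<le> e - e'"
proof -
  have \<Phi>: "ereal_convex (\<lambda>x. Eobj \<psi> \<gamma> Xh x v C)"
    using ereal_convex_compose_affine[OF ereal_convex_Eobj[OF \<psi>], of "\<lambda>x. (x, v, C)"]
    by (simp add: algebra_simps)
  have \<rho>: "strongly_convex (\<lambda>x. lam * (R1 x + R2 v + R3 C)) (lam * \<sigma>)"
    using strongly_convex_scale_shift[OF R1 lam, of "lam * (R2 v + R3 C)"] by (simp add: algebra_simps)
  show thesis
    using armijo_step_sufficient_decrease[OF \<Phi> \<rho> c1] x step that unfolding Elam_def by blast
qed

lemma Elam_v_block_decrease:
  assumes \<psi>: "legendre_type \<psi>" and R2: "strongly_convex R2 \<sigma>" and lam: "0 \<le> lam"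
    and c1: "0 < c1" "c1 < 1"
    and x: "Elam \<psi> \<gamma> Xh lam R1 R2 R3 u x C = ereal e"
    and step: "armijo_step (\<lambda>x. Elam \<psi> \<gamma> Xh lam R1 R2 R3 u x C) c1 x x'"
  obtains e' where "Elam \<psi> \<gamma> Xh lam R1 R2 R3 u x' C = ereal e'"
    and "c1 * (lam * \<sigma>) / (2 * (1 - c1)) * (norm (x' - x))\<^sup>2 \<le> e - e'"
proof -
  have \<Phi>: "ereal_convex (\<lambda>x. Eobj \<psi> \<gamma> Xh u x C)"
    using ereal_convex_compose_affine[OF ereal_convex_Eobj[OF \<psi>], of "\<lambda>x. (u, x, C)"]
    by (simp add: algebra_simps)
  have \<rho>: "strongly_convex (\<lambda>x. lam * (R1 u + R2 x + R3 C)) (lam * \<sigma>)"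
    using strongly_convex_scale_shift[OF R2 lam, of "lam * (R1 u + R3 C)"] by (simp add: algebra_simps)
  show thesis
    using armijo_step_sufficient_decrease[OF \<Phi> \<rho> c1] x step that unfolding Elam_def by blast
qed

lemma Elam_C_block_decrease:
  assumes \<psi>: "legendre_type \<psi>" and R3: "strongly_convex R3 \<sigma>" and lam: "0 \<le> lam"
    and c1: "0 < c1" "c1 < 1"
    and x: "Elam \<psi> \<gamma> Xh lam R1 R2 R3 u v x = ereal e"
    and step: "armijo_step (\<lambda>x. Elam \<psi> \<gamma> Xh lam R1 R2 R3 u v x) c1 x x'"
  obtains e' where "Elam \<psi> \<gamma> Xh lam R1 R2 R3 u v x' = ereal e'"
    and "c1 * (lam * \<sigma>) / (2 * (1 - c1)) * (norm (x' - x))\<^sup>2 \<le> e - e'"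
proof -
  have \<Phi>: "ereal_convex (\<lambda>x. Eobj \<psi> \<gamma> Xh u v x)"
    using ereal_convex_compose_affine[OF ereal_convex_Eobj[OF \<psi>], of "\<lambda>x. (u, v, x)"]
    by (simp add: algebra_simps)
  have \<rho>: "strongly_convex (\<lambda>x. lam * (R1 u + R2 v + R3 x)) (lam * \<sigma>)"
    using strongly_convex_scale_shift[OF R3 lam, of "lam * (R1 u + R2 v)"] by (simp add: algebra_simps)
  show thesis
    using armijo_step_sufficient_decrease[OF \<Phi> \<rho> c1] x step that unfolding Elam_def by blast
qed

theorem lemma1:
  fixes \<psi> :: "real \<Rightarrow> ereal"
    and Xh :: "real^'n^'n" and \<mu> \<nu> :: "real^'n"
    and R1 R2 :: "real^'n \<Rightarrow> real" and R3 :: "real^'n^'n \<Rightarrow> real"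
    and \<sigma>1 \<sigma>2 \<sigma>3 \<gamma> lam \<beta> c1 :: real
    and S :: "(real^'n^'n) set"
    and u v :: "nat \<Rightarrow> real^'n" and C :: "nat \<Rightarrow> real^'n^'n"
  assumes Xh_nonneg: "\<forall>i j. 0 \<le> Xh $ i $ j"
    and Xh_rows: "\<forall>i. (\<Sum>j\<in>UNIV. Xh $ i $ j) = \<mu> $ i"
    and Xh_cols: "\<forall>j. (\<Sum>i\<in>UNIV. Xh $ i $ j) = \<nu> $ j"
    and mu_prob: "(\<forall>i. 0 \<le> \<mu> $ i) \<and> (\<Sum>i\<in>UNIV. \<mu> $ i) = 1"
    and nu_prob: "(\<forall>j. 0 \<le> \<nu> $ j) \<and> (\<Sum>j\<in>UNIV. \<nu> $ j) = 1"
    and A1: "legendre_type \<psi>" "C2_on (interior (edom \<psi>)) (rval \<psi>)"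
    and A2: "\<forall>k i j. Xh $ i $ j \<in> interior (edom \<psi>) \<and>
                     (u k $ i + v k $ j - C k $ i $ j) / \<gamma> \<in> interior (edom \<psi>)"
    and A3: "C1_grad R1" "C1_grad R2" "C1_grad R3"
            "\<sigma>1 > 0" "\<sigma>2 > 0" "\<sigma>3 > 0"
            "strongly_convex R1 \<sigma>1" "strongly_convex R2 \<sigma>2" "strongly_convex R3 \<sigma>3"
    and A4: "S \<noteq> {}" "closed S" "convex S"
    and params: "\<gamma> > 0" "lam > 0" "0 < \<beta>" "\<beta> < 1" "0 < c1" "c1 < 1 / 2"
    and init: "C 0 \<in> S"
    and ublk: "\<forall>k. newton_block (\<lambda>x. Elam \<psi> \<gamma> Xh lam R1 R2 R3 x (v k) (C k)) \<beta> c1 (u k) (u (Suc k))"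
    and vblk: "\<forall>k. newton_block (\<lambda>y. Elam \<psi> \<gamma> Xh lam R1 R2 R3 (u (Suc k)) y (C k)) \<beta> c1 (v k) (v (Suc k))"
    and Cblk: "\<forall>k. proj_block S (\<lambda>Z. Elam \<psi> \<gamma> Xh lam R1 R2 R3 (u (Suc k)) (v (Suc k)) Z) \<beta> c1 (C k) (C (Suc k))"
  shows "\<exists>w1>0. \<forall>k.
           Elam \<psi> \<gamma> Xh lam R1 R2 R3 (u k) (v k) (C k) - Elam \<psi> \<gamma> Xh lam R1 R2 R3 (u (Suc k)) (v (Suc k)) (C (Suc k))
             \<ge> ereal (w1 * (norm ((u (Suc k), v (Suc k), C (Suc k)) - (u k, v k, C k)))\<^sup>2)"
proof -
  let ?E = "Elam \<psi> \<gamma> Xh lam R1 R2 R3"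
  define \<sigma> where "\<sigma> = min \<sigma>1 (min \<sigma>2 \<sigma>3)"
  define w1 where "w1 = c1 * (lam * \<sigma>) / (2 * (1 - c1))"
  have c1: "0 < c1" "c1 < 1" and lam: "0 \<le> lam"
    using params by auto
  have R: "strongly_convex R1 \<sigma>" "strongly_convex R2 \<sigma>" "strongly_convex R3 \<sigma>"
    using A3(7-9) unfolding \<sigma>_def by (auto intro: strongly_convex_antimono)
  have "w1 > 0"
    using params A3(4-6) unfolding w1_def \<sigma>_def by simp
  moreover have "?E (u k) (v k) (C k) - ?E (u (Suc k)) (v (Suc k)) (C (Suc k))
      \<ge> ereal (w1 * (norm ((u (Suc k), v (Suc k), C (Suc k)) - (u k, v k, C k)))\<^sup>2)" for k
  proof -
    obtain e0 where e0: "?E (u k) (v k) (C k) = ereal e0"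
      using Elam_finite[OF A1(1)] A2 interior_subset by blast
    obtain e1 where e1: "?E (u (Suc k)) (v k) (C k) = ereal e1"
      and du: "w1 * (norm (u (Suc k) - u k))\<^sup>2 \<le> e0 - e1"
      using Elam_u_block_decrease[OF A1(1) R(1) lam c1 e0 newton_block_imp_armijo_step[OF ublk[rule_format]]]
      unfolding w1_def by blast
    obtain e2 where e2: "?E (u (Suc k)) (v (Suc k)) (C k) = ereal e2"
      and dv: "w1 * (norm (v (Suc k) - v k))\<^sup>2 \<le> e1 - e2"
      using Elam_v_block_decrease[OF A1(1) R(2) lam c1 e1 newton_block_imp_armijo_step[OF vblk[rule_format]]]
      unfolding w1_def by blast
    obtain e3 where e3: "?E (u (Suc k)) (v (Suc k)) (C (Suc k)) = ereal e3"
      and dC: "w1 * (norm (C (Suc k) - C k))\<^sup>2 \<le> e2 - e3"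
      using Elam_C_block_decrease[OF A1(1) R(3) lam c1 e2 proj_block_imp_armijo_step[OF Cblk[rule_format]]]
      unfolding w1_def by blast
    show ?thesis
      using du dv dC unfolding e0 e3 by (simp add: norm_Pair algebra_simps)
  qed
  ultimately show ?thesis by blast
qed

end
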